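(* Let $b,f\in C^2(\overline I)$ with $0<\underline b\le b\le\overline b$ on $\overline I$, and for $\varepsilon\in(0,1]$ let $u_\varepsilon$ be the solution of the model problem. There are constants $C,c>0$ independent of $\varepsilon$ and $N$ such that for every integer $N\ge2$ and every $\varepsilon\in(0,1]$ $$\inf_{\Phi\in\mathcal{NN}^{\mathrm{ReLU}}_{2,cN,1,1}}\|u_\varepsilon-\mathrm R(\Phi)\|_{1,\varepsilon,I}\le CN^{-1}\log N,\qquad \inf_{\Phi\in\mathcal{NN}^{\mathrm{ReLU}}_{2,cN,1,1}}\|u_\varepsilon-\mathrm R(\Phi)\|_{L^2(I)}\le C(N^{-1}\log N)^2.$$
   Context: $I=(-1,1)$; model problem: $-\varepsilon^2u''+bu=f$ in $I$, $u(\pm1)=0$. Energy norm $\|w\|_{1,\varepsilon,I}^2=\int_I(\varepsilon^2(w')^2+bw^2)dx$. $\mathcal{NN}^{\mathrm{ReLU}}_{L,W,d,N_L}$ denotes feedforward networks $\Phi=((A_1,b_1),\dots,(A_L,b_L))$ of depth $L$, width at most $W$, input dimension $d$, output dimension $N_L$, with realization $\mathrm R(\Phi)$ given by alternating affine maps and componentwise ReLU $\max\{0,\cdot\}$ in the hidden layers (no activation in the last layer). *)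

theory Defs
  imports "HOL-Analysis.Analysis"
begin

text \<open>A layer is a pair (A, b) of a weight matrix and a bias vector; vectors are
  functions nat => real, matrices nat => nat => real. A network is a pair (ns, ls)
  where ns = [N_0, ..., N_L] are the layer dimensions and ls = [(A_1,b_1),...,(A_L,b_L)].
  Layer l maps R^(N_(l-1)) to R^(N_l); only entries within these dimensions matter.\<close>

type_synonym layer = "(nat \<Rightarrow> nat \<Rightarrow> real) \<times> (nat \<Rightarrow> real)"
type_synonym network = "nat list \<times> layer list"

definition affine :: "nat \<Rightarrow> nat \<Rightarrow> layer \<Rightarrow> (nat \<Rightarrow> real) \<Rightarrow> (nat \<Rightarrow> real)" where
  "affine m n l x = (\<lambda>i. if i < m then (\<Sum>j<n. fst l i j * x j) + snd l i else 0)"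

definition relu :: "(nat \<Rightarrow> real) \<Rightarrow> (nat \<Rightarrow> real)" where
  "relu x = (\<lambda>i. max 0 (x i))"

fun realize :: "nat list \<Rightarrow> layer list \<Rightarrow> (nat \<Rightarrow> real) \<Rightarrow> (nat \<Rightarrow> real)" where
  "realize (n # m # ns) (l # ls) x =
     (if ls = [] then affine m n l x else realize (m # ns) ls (relu (affine m n l x)))"
| "realize _ _ x = x"

definition NN :: "nat \<Rightarrow> nat \<Rightarrow> nat \<Rightarrow> nat \<Rightarrow> network set" where
  "NN L W d NL = {(ns, ls). L \<ge> 1 \<and> length ls = L \<and> length ns = L + 1 \<and>
      hd ns = d \<and> last ns = NL \<and> (\<forall>k\<in>set ns. k \<le> W)}"

definition R :: "network \<Rightarrow> real \<Rightarrow> real" where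
  "R \<Phi> x = realize (fst \<Phi>) (snd \<Phi>) (\<lambda>_. x) 0"

definition energy_norm :: "real \<Rightarrow> (real \<Rightarrow> real) \<Rightarrow> (real \<Rightarrow> real) \<Rightarrow> real" where
  "energy_norm \<epsilon> b w =
     sqrt (\<integral>x\<in>{-1<..<1}. (\<epsilon>\<^sup>2 * (deriv w x)\<^sup>2 + b x * (w x)\<^sup>2) \<partial>lborel)"

definition L2_norm_I :: "(real \<Rightarrow> real) \<Rightarrow> real" where
  "L2_norm_I w = sqrt (\<integral>x\<in>{-1<..<1}. (w x)\<^sup>2 \<partial>lborel)"

definition C2_on :: "(real \<Rightarrow> real) \<Rightarrow> real set \<Rightarrow> bool" where
  "C2_on g S \<longleftrightarrow> (\<exists>g' g''. (\<forall>x\<in>S. (g has_real_derivative g' x) (at x within S)) \<and>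
      (\<forall>x\<in>S. (g' has_real_derivative g'' x) (at x within S)) \<and> continuous_on S g'')"

definition is_solution :: "real \<Rightarrow> (real \<Rightarrow> real) \<Rightarrow> (real \<Rightarrow> real) \<Rightarrow> (real \<Rightarrow> real) \<Rightarrow> bool" where
  "is_solution \<epsilon> b f u \<longleftrightarrow> continuous_on {-1..1} u \<and> u (-1) = 0 \<and> u 1 = 0 \<and>
     (\<exists>u' u''. \<forall>x\<in>{-1<..<1}. (u has_real_derivative u' x) (at x) \<and>
        (u' has_real_derivative u'' x) (at x) \<and>
        - \<epsilon>\<^sup>2 * u'' x + b x * u x = f x)"

end

theory Submission
  imports Defs
begin

(* Put g = f / b, a C^2 function. The remainder v = u - g solves
   -eps^2 v'' + b v = eps^2 g'', so the maximum principle with the barrier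
   G/b_lo eps^2 + B (exp (-beta (1 + x) / eps) + exp (-beta (1 - x) / eps)), beta = sqrt b_lo,
   bounds v, and eps^2 u'' = b v is bounded as well. Interpolate u linearly on the Shishkin mesh
   with 3N cells and transition point tau = min (1/2) (2 eps ln N / beta); the interpolant is a sum
   of hinges max 0 (x - t_j), i.e. a ReLU network of depth 2 and width 3N. On every cell the error
   is O((ln N / N)^2) and eps times the error of the derivative is O(ln N / N): in the layer cells
   because h / eps = O(ln N / N); in the coarse cells because v = O(eps^2 + N^-2) there, so either
   eps >= 1/N and u'' = O(1), or eps < 1/N and u is the smooth g plus a remainder which, together
   with its derivative scaled by eps (Landau's inequality on intervals of length eps), is O(N^-2).
   Integrating the pointwise bounds gives both norm estimates. *)

lemma C2_on_divide:
  fixes f g :: "real \<Rightarrow> real"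
  assumes f: "C2_on f S" and g: "C2_on g S" and nonzero: "\<And>x. x \<in> S \<Longrightarrow> g x \<noteq> 0"
  shows "C2_on (\<lambda>x. f x / g x) S"
proof -
  obtain f' f'' where df: "\<And>x. x \<in> S \<Longrightarrow> (f has_real_derivative f' x) (at x within S)"
    and d2f: "\<And>x. x \<in> S \<Longrightarrow> (f' has_real_derivative f'' x) (at x within S)"
    and "continuous_on S f''"
    using f unfolding C2_on_def by blast
  obtain g' g'' where dg: "\<And>x. x \<in> S \<Longrightarrow> (g has_real_derivative g' x) (at x within S)"
    and d2g: "\<And>x. x \<in> S \<Longrightarrow> (g' has_real_derivative g'' x) (at x within S)"
    and "continuous_on S g''"
    using g unfolding C2_on_def by blast
  have cont: "continuous_on S f" "continuous_on S f'" "continuous_on S g" "continuous_on S g'"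
    using df d2f dg d2g by (auto intro!: DERIV_continuous_on)
  define q' where "q' x = f' x / g x - f x * g' x / (g x)\<^sup>2" for x
  define q'' where "q'' x = f'' x / g x - 2 * f' x * g' x / (g x)\<^sup>2 - f x * g'' x / (g x)\<^sup>2
      + 2 * f x * (g' x)\<^sup>2 / (g x)^3" for x
  have "((\<lambda>x. f x / g x) has_real_derivative q' x) (at x within S)" if "x \<in> S" for x
    using df[OF that] dg[OF that] nonzero[OF that]
    by (auto intro!: derivative_eq_intros simp: q'_def field_simps power2_eq_square)
  moreover have "(q' has_real_derivative q'' x) (at x within S)" if "x \<in> S" for x
    unfolding q'_def[abs_def] using df[OF that] dg[OF that] d2f[OF that] d2g[OF that] nonzero[OF that]
    by (auto intro!: derivative_eq_intros simp: q''_def field_simps power2_eq_square power3_eq_cube)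
  moreover have "continuous_on S q''"
    unfolding q''_def using nonzero
    by (intro continuous_intros cont \<open>continuous_on S g''\<close> \<open>continuous_on S f''\<close>) auto
  ultimately show ?thesis unfolding C2_on_def by blast
qed

lemma C2_on_Icc_bounded_second_deriv:
  fixes g :: "real \<Rightarrow> real"
  assumes "C2_on g {a..c}"
  shows "\<exists>G g' g''. continuous_on {a..c} g \<and> 0 \<le> G \<and> (\<forall>x\<in>{a<..<c}.
    (g has_real_derivative g' x) (at x) \<and> (g' has_real_derivative g'' x) (at x) \<and> \<bar>g'' x\<bar> \<le> G)"
proof -
  obtain g' g'' where dg: "\<And>x. x \<in> {a..c} \<Longrightarrow> (g has_real_derivative g' x) (at x within {a..c})"
    and d2g: "\<And>x. x \<in> {a..c} \<Longrightarrow> (g' has_real_derivative g'' x) (at x within {a..c})"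
    and "continuous_on {a..c} g''"
    using assms unfolding C2_on_def by blast
  obtain G where "0 \<le> G" and G: "\<And>x. x \<in> {a..c} \<Longrightarrow> norm (g'' x) \<le> G"
    using continuous_on_compact_bound[OF compact_Icc \<open>continuous_on {a..c} g''\<close>] by blast
  have "(g has_real_derivative g' x) (at x) \<and> (g' has_real_derivative g'' x) (at x) \<and> \<bar>g'' x\<bar> \<le> G"
    if x: "x \<in> {a<..<c}" for x
  proof -
    have xS: "x \<in> {a..c}" using x by simp
    have "at x within {a..c} = at x"
      using x by (metis at_within_interior interior_atLeastAtMost_real)
    then show ?thesis using dg[OF xS] d2g[OF xS] G[OF xS] by simp
  qed
  moreover have "continuous_on {a..c} g"
    by (rule DERIV_continuous_on[OF dg])
  ultimately show ?thesis using \<open>0 \<le> G\<close> by blast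
qed

section \<open>A barrier for the reaction-diffusion operator\<close>

lemma second_deriv_nonneg_at_min:
  fixes w w' w'' :: "real \<Rightarrow> real"
  assumes x0: "x0 \<in> {a<..<c}" and min: "\<And>y. y \<in> {a<..<c} \<Longrightarrow> w x0 \<le> w y"
    and deriv: "\<And>x. x \<in> {a<..<c} \<Longrightarrow>
      (w has_real_derivative w' x) (at x) \<and> (w' has_real_derivative w'' x) (at x)"
  shows "0 \<le> w'' x0"
proof (rule ccontr)
  assume "\<not> 0 \<le> w'' x0"
  have D1: "(w has_real_derivative w' x0) (at x0)" and D2: "(w' has_real_derivative w'' x0) (at x0)"
    using deriv[OF x0] by auto
  have "w' x0 = 0"
  proof (rule DERIV_local_min[OF D1])
    show "0 < min (x0 - a) (c - x0)" using x0 by auto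
    show "\<forall>y. \<bar>x0 - y\<bar> < min (x0 - a) (c - x0) \<longrightarrow> w x0 \<le> w y"
      using min by (auto simp: abs_less_iff)
  qed
  then obtain d where "0 < d" and w'_neg: "\<And>h. 0 < h \<Longrightarrow> h < d \<Longrightarrow> w' (x0 + h) < 0"
    using DERIV_neg_dec_right[OF D2] \<open>\<not> 0 \<le> w'' x0\<close> by auto
  define m where "m = min d (c - x0)"
  have "0 < m" "m \<le> d" "m \<le> c - x0" using \<open>0 < d\<close> x0 by (auto simp: m_def)
  define h where "h = m / 2"
  have h: "0 < h" "h < d" "x0 + h < c"
    using \<open>0 < m\<close> \<open>m \<le> d\<close> \<open>m \<le> c - x0\<close> by (simp_all add: h_def)
  have "\<forall>y. x0 \<le> y \<and> y \<le> x0 + h \<longrightarrow> (w has_real_derivative w' y) (at y)"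
  proof (intro allI impI)
    fix y assume "x0 \<le> y \<and> y \<le> x0 + h"
    then have "y \<in> {a<..<c}" using x0 h by auto
    then show "(w has_real_derivative w' y) (at y)" using deriv by blast
  qed
  then obtain z where z: "x0 < z" "z < x0 + h" "w (x0 + h) - w x0 = (x0 + h - x0) * w' z"
    using MVT2[of x0 "x0 + h" w w'] h by auto
  have "w' z < 0" using w'_neg[of "z - x0"] z h by auto
  then have "h * w' z < 0" using h(1) by (simp add: mult_pos_neg)
  then have "w (x0 + h) < w x0" using z(3) by simp
  moreover have "w x0 \<le> w (x0 + h)" using h x0 by (intro min) auto
  ultimately show False by linarith
qed

lemma minimum_principle:
  fixes w w' w'' :: "real \<Rightarrow> real"
  assumes cont: "continuous_on {a..c} w" and boundary: "0 \<le> w a" "0 \<le> w c"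
    and deriv: "\<And>x. x \<in> {a<..<c} \<Longrightarrow>
      (w has_real_derivative w' x) (at x) \<and> (w' has_real_derivative w'' x) (at x)"
    and concave_where_negative: "\<And>x. x \<in> {a<..<c} \<Longrightarrow> w x < 0 \<Longrightarrow> w'' x < 0"
    and x: "x \<in> {a..c}"
  shows "0 \<le> w x"
proof (rule ccontr)
  assume "\<not> 0 \<le> w x"
  have "{a..c} \<noteq> {}" using x by blast
  then obtain x0 where x0: "x0 \<in> {a..c}" and min: "\<And>y. y \<in> {a..c} \<Longrightarrow> w x0 \<le> w y"
    using continuous_attains_inf[OF compact_Icc _ cont] by meson
  have neg: "w x0 < 0" using min[OF x] \<open>\<not> 0 \<le> w x\<close> by linarith
  then have "x0 \<noteq> a" "x0 \<noteq> c" using boundary by auto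
  then have x0_in: "x0 \<in> {a<..<c}" using x0 by auto
  have "0 \<le> w'' x0"
    by (rule second_deriv_nonneg_at_min[where w = w and w' = w', OF x0_in]) (use min deriv in auto)
  with concave_where_negative[OF x0_in neg] show False by linarith
qed

definition boundary_layer :: "real \<Rightarrow> real \<Rightarrow> real \<Rightarrow> real" where
  "boundary_layer \<beta> \<epsilon> x = exp (- \<beta> * (1 + x) / \<epsilon>) + exp (- \<beta> * (1 - x) / \<epsilon>)"

lemma boundary_layer_pos: "0 < boundary_layer \<beta> \<epsilon> x"
  by (simp add: boundary_layer_def add_pos_pos)

lemma boundary_layer_endpoint_ge_1: "x = -1 \<or> x = 1 \<Longrightarrow> 1 \<le> boundary_layer \<beta> \<epsilon> x"
  by (auto simp: boundary_layer_def add_increasing2)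

lemma boundary_layer_le:
  assumes "0 \<le> \<beta>" "0 < \<epsilon>" "-1 + \<tau> \<le> x" "x \<le> 1 - \<tau>"
  shows "boundary_layer \<beta> \<epsilon> x \<le> 2 * exp (- \<beta> * \<tau> / \<epsilon>)"
proof -
  have "exp (- \<beta> * (1 + x) / \<epsilon>) \<le> exp (- \<beta> * \<tau> / \<epsilon>)"
    "exp (- \<beta> * (1 - x) / \<epsilon>) \<le> exp (- \<beta> * \<tau> / \<epsilon>)"
    using assms by (auto simp: divide_right_mono mult_left_mono)
  then show ?thesis unfolding boundary_layer_def by linarith
qed

lemma boundary_layer_has_deriv:
  "(boundary_layer \<beta> \<epsilon> has_real_derivative
     \<beta> / \<epsilon> * (exp (- \<beta> * (1 - x) / \<epsilon>) - exp (- \<beta> * (1 + x) / \<epsilon>))) (at x)"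
  unfolding boundary_layer_def[abs_def]
  by (cases "\<epsilon> = 0") (auto intro!: derivative_eq_intros simp: algebra_simps)

lemma boundary_layer_deriv_has_deriv:
  "((\<lambda>x. \<beta> / \<epsilon> * (exp (- \<beta> * (1 - x) / \<epsilon>) - exp (- \<beta> * (1 + x) / \<epsilon>)))
     has_real_derivative (\<beta> / \<epsilon>)\<^sup>2 * boundary_layer \<beta> \<epsilon> x) (at x)"
  unfolding boundary_layer_def
  by (cases "\<epsilon> = 0") (auto intro!: derivative_eq_intros simp: algebra_simps power2_eq_square)

lemma reaction_diffusion_barrier_upper:
  fixes v v' v'' q b :: "real \<Rightarrow> real"
  assumes b_lo: "0 < b_lo" "\<And>x. x \<in> {-1..1} \<Longrightarrow> b_lo \<le> b x" and eps: "0 < \<epsilon>"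
    and cont: "continuous_on {-1..1} v"
    and deriv: "\<And>x. x \<in> {-1<..<1} \<Longrightarrow>
      (v has_real_derivative v' x) (at x) \<and> (v' has_real_derivative v'' x) (at x)"
    and equation: "\<And>x. x \<in> {-1<..<1} \<Longrightarrow> - \<epsilon>\<^sup>2 * v'' x + b x * v x = \<epsilon>\<^sup>2 * q x"
    and source: "\<And>x. x \<in> {-1<..<1} \<Longrightarrow> q x \<le> G" and "0 \<le> G"
    and boundary: "v (-1) \<le> B" "v 1 \<le> B" and "0 \<le> B"
    and x: "x \<in> {-1..1}"
  shows "v x \<le> G / b_lo * \<epsilon>\<^sup>2 + B * boundary_layer (sqrt b_lo) \<epsilon> x"
proof -
  define \<beta> where "\<beta> = sqrt b_lo"
  define E where "E = boundary_layer \<beta> \<epsilon>"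
  define E' where "E' y = \<beta> / \<epsilon> * (exp (- \<beta> * (1 - y) / \<epsilon>) - exp (- \<beta> * (1 + y) / \<epsilon>))" for y
  define \<phi> where "\<phi> y = G / b_lo * \<epsilon>\<^sup>2 + B * E y" for y
  have \<phi>_nonneg: "0 \<le> \<phi> y" for y
    using b_lo \<open>0 \<le> G\<close> \<open>0 \<le> B\<close> boundary_layer_pos[of \<beta> \<epsilon> y] by (simp add: \<phi>_def E_def)
  have dE: "(E has_real_derivative E' y) (at y)" for y
    unfolding E_def E'_def by (rule boundary_layer_has_deriv)
  have dE': "(E' has_real_derivative (\<beta> / \<epsilon>)\<^sup>2 * E y) (at y)" for y
    unfolding E_def E'_def[abs_def] by (rule boundary_layer_deriv_has_deriv)
  have \<beta>_sq: "\<epsilon>\<^sup>2 * (\<beta> / \<epsilon>)\<^sup>2 = b_lo"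
    using eps b_lo by (simp add: \<beta>_def power_divide)
  \<comment> \<open>\<phi> is a supersolution, -\<epsilon>^2 \<phi>'' + b \<phi> \<ge> \<epsilon>^2 G, so \<phi> - v has no negative minimum.\<close>
  have "0 \<le> \<phi> x - v x"
  proof (rule minimum_principle[where w = "\<lambda>y. \<phi> y - v y" and w' = "\<lambda>y. B * E' y - v' y"
        and w'' = "\<lambda>y. B * ((\<beta> / \<epsilon>)\<^sup>2 * E y) - v'' y"])
    show "continuous_on {-1..1} (\<lambda>y. \<phi> y - v y)"
      unfolding \<phi>_def E_def boundary_layer_def
      by (intro continuous_intros cont) (use eps in auto)
    have "B \<le> \<phi> y" if "y = -1 \<or> y = 1" for y
      using boundary_layer_endpoint_ge_1[OF that, of \<beta> \<epsilon>] b_lo \<open>0 \<le> G\<close> \<open>0 \<le> B\<close>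
      by (simp add: \<phi>_def E_def add_increasing mult_le_cancel_left1)
    then show "0 \<le> \<phi> (-1) - v (-1)" "0 \<le> \<phi> 1 - v 1" using boundary by force+
    fix y :: real assume y: "y \<in> {-1<..<1}"
    show "((\<lambda>y. \<phi> y - v y) has_real_derivative B * E' y - v' y) (at y) \<and>
      ((\<lambda>y. B * E' y - v' y) has_real_derivative B * ((\<beta> / \<epsilon>)\<^sup>2 * E y) - v'' y) (at y)"
      unfolding \<phi>_def[abs_def] using deriv[OF y] by (auto intro!: derivative_eq_intros dE dE')
    assume "\<phi> y - v y < 0"
    have "b_lo * \<phi> y \<le> b y * \<phi> y" using b_lo(2) y \<phi>_nonneg by (intro mult_right_mono) auto
    also have "\<dots> < b y * v y"
      using \<open>\<phi> y - v y < 0\<close> b_lo(1) b_lo(2)[of y] y by (intro mult_strict_left_mono) auto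
    also have "\<dots> = \<epsilon>\<^sup>2 * v'' y + \<epsilon>\<^sup>2 * q y" using equation[OF y] by simp
    also have "\<dots> \<le> \<epsilon>\<^sup>2 * v'' y + \<epsilon>\<^sup>2 * G" using source[OF y] by (simp add: mult_left_mono)
    finally have "\<epsilon>\<^sup>2 * (B * ((\<beta> / \<epsilon>)\<^sup>2 * E y)) < \<epsilon>\<^sup>2 * v'' y"
      using b_lo \<beta>_sq by (simp add: \<phi>_def algebra_simps)
    then show "B * ((\<beta> / \<epsilon>)\<^sup>2 * E y) - v'' y < 0" using eps by simp
  qed (use x in auto)
  then show ?thesis by (simp add: \<phi>_def E_def \<beta>_def)
qed

lemma reaction_diffusion_barrier:
  fixes v v' v'' q b :: "real \<Rightarrow> real"
  assumes b_lo: "0 < b_lo" "\<And>x. x \<in> {-1..1} \<Longrightarrow> b_lo \<le> b x" and eps: "0 < \<epsilon>"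
    and cont: "continuous_on {-1..1} v"
    and deriv: "\<And>x. x \<in> {-1<..<1} \<Longrightarrow>
      (v has_real_derivative v' x) (at x) \<and> (v' has_real_derivative v'' x) (at x)"
    and equation: "\<And>x. x \<in> {-1<..<1} \<Longrightarrow> - \<epsilon>\<^sup>2 * v'' x + b x * v x = \<epsilon>\<^sup>2 * q x"
    and source: "\<And>x. x \<in> {-1<..<1} \<Longrightarrow> \<bar>q x\<bar> \<le> G"
    and boundary: "\<bar>v (-1)\<bar> \<le> B" "\<bar>v 1\<bar> \<le> B"
    and x: "x \<in> {-1..1}"
  shows "\<bar>v x\<bar> \<le> G / b_lo * \<epsilon>\<^sup>2 + B * boundary_layer (sqrt b_lo) \<epsilon> x"
proof -
  have "0 \<le> G" using source[of 0] by force
  have "0 \<le> B" using boundary by force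
  have "v x \<le> G / b_lo * \<epsilon>\<^sup>2 + B * boundary_layer (sqrt b_lo) \<epsilon> x"
    by (rule reaction_diffusion_barrier_upper[OF b_lo eps cont deriv equation _ \<open>0 \<le> G\<close> _ _ \<open>0 \<le> B\<close> x])
      (use source boundary in \<open>auto simp: abs_le_iff\<close>)
  moreover have "- v x \<le> G / b_lo * \<epsilon>\<^sup>2 + B * boundary_layer (sqrt b_lo) \<epsilon> x"
  proof (rule reaction_diffusion_barrier_upper[OF b_lo eps _ _ _ _ \<open>0 \<le> G\<close> _ _ \<open>0 \<le> B\<close> x,
        where v = "\<lambda>x. - v x" and v' = "\<lambda>x. - v' x" and v'' = "\<lambda>x. - v'' x" and q = "\<lambda>x. - q x"])
    show "continuous_on {-1..1} (\<lambda>x. - v x)" by (intro continuous_intros cont)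
    fix y :: real assume y: "y \<in> {-1<..<1}"
    show "((\<lambda>x. - v x) has_real_derivative - v' y) (at y) \<and>
        ((\<lambda>x. - v' x) has_real_derivative - v'' y) (at y)"
      using deriv[OF y] by (auto intro!: derivative_eq_intros)
    show "- \<epsilon>\<^sup>2 * - v'' y + b y * - v y = \<epsilon>\<^sup>2 * - q y" using equation[OF y] by simp
    show "- q y \<le> G" using source[OF y] by simp
  qed (use boundary in auto)
  ultimately show ?thesis by simp
qed

section \<open>Linear interpolation\<close>

definition linear_interpolant :: "(real \<Rightarrow> real) \<Rightarrow> real \<Rightarrow> real \<Rightarrow> real \<Rightarrow> real" where
  "linear_interpolant \<phi> a c x = \<phi> a + (\<phi> c - \<phi> a) / (c - a) * (x - a)"

lemma abs_diff_le_deriv_bound: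
  fixes \<phi> \<phi>' :: "real \<Rightarrow> real"
  assumes "\<And>z. z \<in> {min x y..max x y} \<Longrightarrow> (\<phi> has_real_derivative \<phi>' z) (at z) \<and> \<bar>\<phi>' z\<bar> \<le> M"
  shows "\<bar>\<phi> y - \<phi> x\<bar> \<le> M * \<bar>y - x\<bar>"
  using field_differentiable_bound[of "{min x y..max x y}" \<phi> \<phi>' M y x] assms
  by (auto intro: has_field_derivative_at_within)

lemma MVT_open_interval:
  fixes \<phi> \<phi>' :: "real \<Rightarrow> real"
  assumes "a < c" and "continuous_on {a..c} \<phi>"
    and "\<And>x. x \<in> {a<..<c} \<Longrightarrow> (\<phi> has_real_derivative \<phi>' x) (at x)"
  obtains \<xi> where "a < \<xi>" "\<xi> < c" "\<phi> c - \<phi> a = (c - a) * \<phi>' \<xi>"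
proof -
  have "(\<phi> has_derivative (*) (\<phi>' x)) (at x)" if "a < x" "x < c" for x
    using assms(3)[of x] that by (simp add: has_field_derivative_def)
  then obtain \<xi> where "a < \<xi>" "\<xi> < c" "\<phi> c - \<phi> a = \<phi>' \<xi> * (c - a)"
    by (rule mvt[OF assms(1,2)])
  then show ?thesis using that by (simp add: mult.commute)
qed

lemma linear_interpolation_error:
  fixes \<phi> \<phi>' \<phi>'' :: "real \<Rightarrow> real"
  assumes "a < c" and cont: "continuous_on {a..c} \<phi>"
    and deriv: "\<And>x. x \<in> {a<..<c} \<Longrightarrow> (\<phi> has_real_derivative \<phi>' x) (at x) \<and>
      (\<phi>' has_real_derivative \<phi>'' x) (at x) \<and> \<bar>\<phi>'' x\<bar> \<le> M"
  shows "x \<in> {a<..<c} \<Longrightarrow> \<bar>\<phi>' x - (\<phi> c - \<phi> a) / (c - a)\<bar> \<le> M * (c - a)"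
    and "x \<in> {a..c} \<Longrightarrow> \<bar>\<phi> x - linear_interpolant \<phi> a c x\<bar> \<le> M * (c - a)\<^sup>2"
proof -
  define s where "s = (\<phi> c - \<phi> a) / (c - a)"
  have "0 \<le> M" using deriv[of "(a + c) / 2"] \<open>a < c\<close> by force
  obtain \<xi> where \<xi>: "a < \<xi>" "\<xi> < c" "\<phi> c - \<phi> a = (c - a) * \<phi>' \<xi>"
    using MVT_open_interval[OF \<open>a < c\<close> cont] deriv by blast
  then have "s = \<phi>' \<xi>" using \<open>a < c\<close> by (simp add: s_def)
  have slope_error: "\<bar>\<phi>' y - s\<bar> \<le> M * (c - a)" if y: "y \<in> {a<..<c}" for y
  proof -
    have "\<bar>\<phi>' y - \<phi>' \<xi>\<bar> \<le> M * \<bar>y - \<xi>\<bar>"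
      by (rule abs_diff_le_deriv_bound[where \<phi>' = \<phi>''])
        (use deriv y \<xi> in \<open>auto simp: min_def max_def split: if_splits\<close>)
    also have "\<dots> \<le> M * (c - a)" using y \<xi> \<open>0 \<le> M\<close> by (intro mult_left_mono) auto
    finally show ?thesis using \<open>s = \<phi>' \<xi>\<close> by simp
  qed
  then show "\<bar>\<phi>' x - (\<phi> c - \<phi> a) / (c - a)\<bar> \<le> M * (c - a)" if "x \<in> {a<..<c}"
    using that by (simp add: s_def)
  define e where "e y = \<phi> y - linear_interpolant \<phi> a c y" for y
  show "\<bar>\<phi> x - linear_interpolant \<phi> a c x\<bar> \<le> M * (c - a)\<^sup>2" if x: "x \<in> {a..c}"
  proof (cases "x = a")
    case True then show ?thesis using \<open>0 \<le> M\<close> by (simp add: linear_interpolant_def)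
  next
    case False
    then have "a < x" using x by auto
    have de: "(e has_real_derivative \<phi>' z - s) (at z)" if "z \<in> {a<..<x}" for z
      unfolding e_def[abs_def] linear_interpolant_def s_def[symmetric]
      using deriv[of z] that x by (auto intro!: derivative_eq_intros)
    have ce: "continuous_on {a..x} e"
      unfolding e_def linear_interpolant_def
      by (intro continuous_intros continuous_on_subset[OF cont]) (use x in auto)
    obtain z where z: "a < z" "z < x" "e x - e a = (x - a) * (\<phi>' z - s)"
      using MVT_open_interval[OF \<open>a < x\<close> ce de] by blast
    have "e a = 0" by (simp add: e_def linear_interpolant_def)
    then have "\<bar>e x\<bar> = (x - a) * \<bar>\<phi>' z - s\<bar>" using z \<open>a < x\<close> by (simp add: abs_mult)
    also have "\<dots> \<le> (c - a) * (M * (c - a))"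
      using slope_error[of z] z x \<open>a < x\<close> by (intro mult_mono) auto
    finally show ?thesis by (simp add: e_def power2_eq_square mult_ac)
  qed
qed

lemma landau_deriv_bound:
  fixes \<phi> \<phi>' \<phi>'' :: "real \<Rightarrow> real"
  assumes "y \<noteq> w"
    and deriv: "\<And>z. z \<in> {min y w..max y w} \<Longrightarrow>
      (\<phi> has_real_derivative \<phi>' z) (at z) \<and> (\<phi>' has_real_derivative \<phi>'' z) (at z)"
    and bound: "\<And>z. z \<in> {min y w..max y w} \<Longrightarrow> \<bar>\<phi> z\<bar> \<le> K"
    and bound'': "\<And>z. z \<in> {min y w..max y w} \<Longrightarrow> \<bar>\<phi>'' z\<bar> \<le> M"
  shows "\<bar>\<phi>' y\<bar> \<le> 2 * K / \<bar>w - y\<bar> + M * \<bar>w - y\<bar>"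
proof -
  let ?lo = "min y w" and ?hi = "max y w"
  have "?lo < ?hi" and width: "?hi - ?lo = \<bar>w - y\<bar>" using \<open>y \<noteq> w\<close> by auto
  have "\<forall>z. ?lo \<le> z \<and> z \<le> ?hi \<longrightarrow> (\<phi> has_real_derivative \<phi>' z) (at z)" using deriv by auto
  then obtain \<xi> where \<xi>: "?lo < \<xi>" "\<xi> < ?hi" "\<phi> ?hi - \<phi> ?lo = (?hi - ?lo) * \<phi>' \<xi>"
    using MVT2[OF \<open>?lo < ?hi\<close>] by blast
  have "\<bar>\<phi> ?hi - \<phi> ?lo\<bar> \<le> 2 * K" using bound[of ?lo] bound[of ?hi] \<open>?lo < ?hi\<close> by auto
  then have "\<bar>w - y\<bar> * \<bar>\<phi>' \<xi>\<bar> \<le> 2 * K" using \<xi>(3) width by (simp add: abs_mult)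
  then have "\<bar>\<phi>' \<xi>\<bar> \<le> 2 * K / \<bar>w - y\<bar>" using \<open>y \<noteq> w\<close> by (simp add: field_simps)
  moreover have "\<bar>\<phi>' \<xi> - \<phi>' y\<bar> \<le> M * \<bar>\<xi> - y\<bar>"
    by (rule abs_diff_le_deriv_bound[where \<phi>' = \<phi>''])
      (use deriv bound'' \<xi> in \<open>auto simp: min_def max_def split: if_splits\<close>)
  moreover have "M * \<bar>\<xi> - y\<bar> \<le> M * \<bar>w - y\<bar>"
    using \<xi> bound''[of y] by (intro mult_left_mono) (auto simp: min_def max_def split: if_splits)
  ultimately show ?thesis by linarith
qed

lemma landau_deriv_bound_scaled:
  fixes \<phi> \<phi>' \<phi>'' :: "real \<Rightarrow> real"
  assumes "0 < \<epsilon>" and y: "y \<in> {lo..hi}" and room: "y + \<epsilon> \<le> hi \<or> lo \<le> y - \<epsilon>"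
    and deriv: "\<And>z. z \<in> {lo..hi} \<Longrightarrow>
      (\<phi> has_real_derivative \<phi>' z) (at z) \<and> (\<phi>' has_real_derivative \<phi>'' z) (at z)"
    and bound: "\<And>z. z \<in> {lo..hi} \<Longrightarrow> \<bar>\<phi> z\<bar> \<le> K"
    and bound'': "\<And>z. z \<in> {lo..hi} \<Longrightarrow> \<epsilon>\<^sup>2 * \<bar>\<phi>'' z\<bar> \<le> Z"
  shows "\<epsilon> * \<bar>\<phi>' y\<bar> \<le> 2 * K + Z"
proof -
  obtain w where "w = y + \<epsilon> \<or> w = y - \<epsilon>" "w \<in> {lo..hi}"
    using room y \<open>0 < \<epsilon>\<close> by force
  then have w: "\<bar>w - y\<bar> = \<epsilon>" "{min y w..max y w} \<subseteq> {lo..hi}"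
    using y \<open>0 < \<epsilon>\<close> by auto
  have "\<bar>\<phi>' y\<bar> \<le> 2 * K / \<epsilon> + Z / \<epsilon>\<^sup>2 * \<epsilon>"
  proof (rule landau_deriv_bound[of y w, unfolded w(1)])
    show "y \<noteq> w" using w(1) \<open>0 < \<epsilon>\<close> by auto
    fix z assume "z \<in> {min y w..max y w}"
    then have z: "z \<in> {lo..hi}" using w(2) by blast
    show "(\<phi> has_real_derivative \<phi>' z) (at z) \<and> (\<phi>' has_real_derivative \<phi>'' z) (at z)"
      using deriv[OF z] .
    show "\<bar>\<phi> z\<bar> \<le> K" using bound[OF z] .
    show "\<bar>\<phi>'' z\<bar> \<le> Z / \<epsilon>\<^sup>2" using bound''[OF z] \<open>0 < \<epsilon>\<close> by (simp add: field_simps)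
  qed
  then have "\<epsilon> * \<bar>\<phi>' y\<bar> \<le> \<epsilon> * (2 * K / \<epsilon> + Z / \<epsilon>\<^sup>2 * \<epsilon>)"
    using \<open>0 < \<epsilon>\<close> by (simp add: mult_left_mono)
  also have "\<dots> = 2 * K + Z" using \<open>0 < \<epsilon>\<close> by (simp add: field_simps power2_eq_square)
  finally show ?thesis .
qed

lemma linear_interpolation_error_smooth_plus_small:
  fixes u g g' g'' :: "real \<Rightarrow> real"
  assumes "a < c"
    and g: "\<And>z. z \<in> {a..c} \<Longrightarrow> (g has_real_derivative g' z) (at z) \<and>
      (g' has_real_derivative g'' z) (at z) \<and> \<bar>g'' z\<bar> \<le> G"
    and small: "\<And>z. z \<in> {a..c} \<Longrightarrow> \<bar>u z - g z\<bar> \<le> \<delta>"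
    and x: "x \<in> {a..c}"
  shows "\<bar>u x - linear_interpolant u a c x\<bar> \<le> G * (c - a)\<^sup>2 + 4 * \<delta>"
proof -
  define v where "v z = u z - g z" for z
  define \<theta> where "\<theta> = (x - a) / (c - a)"
  have "linear_interpolant \<phi> a c x = \<phi> a + (\<phi> c - \<phi> a) * \<theta>" for \<phi>
    by (simp add: linear_interpolant_def \<theta>_def)
  then have decomposition: "u x - linear_interpolant u a c x
      = (g x - linear_interpolant g a c x) + (v x - v a - (v c - v a) * \<theta>)"
    by (simp add: v_def algebra_simps)
  have "0 \<le> \<theta>" "\<theta> \<le> 1" using x \<open>a < c\<close> by (auto simp: \<theta>_def field_simps)
  have v_small: "\<bar>v x\<bar> \<le> \<delta>" "\<bar>v a\<bar> \<le> \<delta>" "\<bar>v c\<bar> \<le> \<delta>"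
    using small x \<open>a < c\<close> by (auto simp: v_def)
  have "\<bar>(v c - v a) * \<theta>\<bar> = \<bar>v c - v a\<bar> * \<theta>" using \<open>0 \<le> \<theta>\<close> by (simp add: abs_mult)
  also have "\<dots> \<le> \<bar>v c - v a\<bar>" using \<open>0 \<le> \<theta>\<close> \<open>\<theta> \<le> 1\<close> by (simp add: mult_left_le)
  also have "\<dots> \<le> 2 * \<delta>" using abs_triangle_ineq4[of "v c" "v a"] v_small by linarith
  finally have "\<bar>(v c - v a) * \<theta>\<bar> \<le> 2 * \<delta>" .
  moreover have "continuous_on {a..c} g"
    by (rule DERIV_atLeastAtMost_imp_continuous_on) (use g in \<open>meson atLeastAtMost_iff\<close>)
  then have "\<bar>g x - linear_interpolant g a c x\<bar> \<le> G * (c - a)\<^sup>2"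
    by (rule linear_interpolation_error(2)[OF \<open>a < c\<close>, where \<phi>' = g' and \<phi>'' = g''])
      (use g x in auto)
  ultimately show ?thesis
    unfolding decomposition using v_small unfolding abs_le_iff by linarith
qed

lemma linear_interpolation_deriv_error_smooth_plus_small:
  fixes u u' g g' g'' :: "real \<Rightarrow> real"
  assumes "a < c" and "0 \<le> \<epsilon>"
    and u: "\<And>z. z \<in> {a..c} \<Longrightarrow> (u has_real_derivative u' z) (at z)"
    and g: "\<And>z. z \<in> {a..c} \<Longrightarrow> (g has_real_derivative g' z) (at z) \<and>
      (g' has_real_derivative g'' z) (at z) \<and> \<bar>g'' z\<bar> \<le> G"
    and small': "\<And>z. z \<in> {a..c} \<Longrightarrow> \<epsilon> * \<bar>u' z - g' z\<bar> \<le> \<delta>'"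
    and x: "x \<in> {a<..<c}"
  shows "\<epsilon> * \<bar>u' x - (u c - u a) / (c - a)\<bar> \<le> \<epsilon> * G * (c - a) + 2 * \<delta>'"
proof -
  have "((\<lambda>z. u z - g z) has_real_derivative u' z - g' z) (at z)" if "z \<in> {a..c}" for z
    using u[OF that] g[OF that] by (auto intro!: derivative_eq_intros)
  then obtain \<xi> where \<xi>: "a < \<xi>" "\<xi> < c" "u c - g c - (u a - g a) = (c - a) * (u' \<xi> - g' \<xi>)"
    using MVT2[OF \<open>a < c\<close>, of "\<lambda>z. u z - g z" "\<lambda>z. u' z - g' z"] by auto
  then have "(u c - u a) / (c - a) = (g c - g a) / (c - a) + (u' \<xi> - g' \<xi>)"
    using \<open>a < c\<close> by (simp add: field_simps)
  then have "\<epsilon> * \<bar>u' x - (u c - u a) / (c - a)\<bar>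
      \<le> \<epsilon> * \<bar>g' x - (g c - g a) / (c - a)\<bar> + \<epsilon> * \<bar>u' x - g' x\<bar> + \<epsilon> * \<bar>u' \<xi> - g' \<xi>\<bar>"
    using \<open>0 \<le> \<epsilon>\<close> by (simp add: distrib_left[symmetric] mult_left_mono)
  moreover have "continuous_on {a..c} g"
    by (rule DERIV_atLeastAtMost_imp_continuous_on) (use g in \<open>meson atLeastAtMost_iff\<close>)
  then have "\<bar>g' x - (g c - g a) / (c - a)\<bar> \<le> G * (c - a)"
    by (rule linear_interpolation_error(1)[OF \<open>a < c\<close>, where \<phi>'' = g''])
      (use g x in auto)
  then have "\<epsilon> * \<bar>g' x - (g c - g a) / (c - a)\<bar> \<le> \<epsilon> * (G * (c - a))"
    using \<open>0 \<le> \<epsilon>\<close> by (rule mult_left_mono)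
  moreover have "\<epsilon> * \<bar>u' x - g' x\<bar> \<le> \<delta>'" "\<epsilon> * \<bar>u' \<xi> - g' \<xi>\<bar> \<le> \<delta>'"
    using small' x \<xi> by auto
  ultimately show ?thesis by (simp add: mult.assoc)
qed

section \<open>Piecewise linear functions as ReLU networks\<close>

definition slope :: "(nat \<Rightarrow> real) \<Rightarrow> (nat \<Rightarrow> real) \<Rightarrow> nat \<Rightarrow> real" where
  "slope t p j = (p (Suc j) - p j) / (t (Suc j) - t j)"

definition hinge_coef :: "(nat \<Rightarrow> real) \<Rightarrow> (nat \<Rightarrow> real) \<Rightarrow> nat \<Rightarrow> real" where
  "hinge_coef t p j = (if j = 0 then slope t p 0 else slope t p j - slope t p (j - 1))"

definition pl_net :: "(nat \<Rightarrow> real) \<Rightarrow> (nat \<Rightarrow> real) \<Rightarrow> nat \<Rightarrow> network" where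
  "pl_net t p n = ([1, n, 1], [(\<lambda>i j. 1, \<lambda>i. - t i), (\<lambda>i j. hinge_coef t p j, \<lambda>i. p 0)])"

lemma R_pl_net: "R (pl_net t p n) x = p 0 + (\<Sum>j<n. hinge_coef t p j * max 0 (x - t j))"
  unfolding R_def pl_net_def by (simp add: affine_def relu_def algebra_simps)

lemma pl_net_in_NN: "1 \<le> n \<Longrightarrow> n \<le> W \<Longrightarrow> pl_net t p n \<in> NN 2 W 1 1"
  unfolding pl_net_def NN_def by auto

lemma sum_hinge_coef:
  assumes "strict_mono t"
  shows "(\<Sum>j\<le>k. hinge_coef t p j * (x - t j)) = slope t p k * (x - t k) + p k - p 0"
proof (induction k)
  case 0 then show ?case by (simp add: hinge_coef_def)
next
  case (Suc k)
  have "t (Suc k) - t k \<noteq> 0" using strict_monoD[OF assms, of k "Suc k"] by simp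
  then have "slope t p k * (t (Suc k) - t k) = p (Suc k) - p k" by (simp add: slope_def)
  with Suc show ?case by (simp add: hinge_coef_def algebra_simps)
qed

lemma R_pl_net_on_cell:
  assumes "strict_mono t" and "k < n" and x: "t k \<le> x" "x \<le> t (Suc k)"
  shows "R (pl_net t p n) x = p k + slope t p k * (x - t k)"
proof -
  have "hinge_coef t p j * max 0 (x - t j) = (if j \<le> k then hinge_coef t p j * (x - t j) else 0)"
    for j
  proof (cases "j \<le> k")
    case True
    then have "t j \<le> t k" using \<open>strict_mono t\<close> by (simp add: strict_mono_less_eq)
    then show ?thesis using True x by simp
  next
    case False
    then have "t (Suc k) \<le> t j" using \<open>strict_mono t\<close> by (simp add: strict_mono_less_eq)
    then show ?thesis using False x by simp
  qed
  then have "(\<Sum>j<n. hinge_coef t p j * max 0 (x - t j)) = (\<Sum>j\<le>k. hinge_coef t p j * (x - t j))"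
    using \<open>k < n\<close> by (simp add: sum.If_cases Int_absorb1 subset_eq lessThan_def atMost_def)
  then show ?thesis using sum_hinge_coef[OF \<open>strict_mono t\<close>] by (simp add: R_pl_net)
qed

lemma R_pl_net_has_deriv:
  assumes "strict_mono t" and "k < n" and x: "t k < x" "x < t (Suc k)"
  shows "(R (pl_net t p n) has_real_derivative slope t p k) (at x)"
proof -
  have "((\<lambda>y. p k + slope t p k * (y - t k)) has_real_derivative slope t p k) (at x)"
    by (auto intro!: derivative_eq_intros)
  then show ?thesis
    by (rule has_field_derivative_transform_within_open[where S = "{t k<..<t (Suc k)}"])
       (use x R_pl_net_on_cell[OF assms(1,2)] in auto)
qed

lemma exists_cell_containing:
  fixes t :: "nat \<Rightarrow> real"
  assumes "t 0 \<le> x" "x < t n"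
  shows "\<exists>k<n. t k \<le> x \<and> x < t (Suc k)"
  using assms(2)
proof (induction n)
  case 0 then show ?case using assms(1) by simp
next
  case (Suc n)
  show ?case
  proof (cases "x < t n")
    case True then show ?thesis using Suc.IH by (meson less_Suc_eq)
  next
    case False then show ?thesis using Suc.prems by (intro exI[of _ n]) auto
  qed
qed

lemma set_integral_Ioo_le_of_bound:
  fixes F :: "real \<Rightarrow> real"
  assumes T: "countable T" and F: "\<And>x. x \<in> {-1<..<1} \<Longrightarrow> x \<notin> T \<Longrightarrow> F x \<le> K" and K0: "K \<ge> 0"
  shows "(\<integral>x\<in>{-1<..<1}. F x \<partial>lborel) \<le> 2 * K"
proof -
  have "(\<integral>x\<in>{-1<..<1}. F x \<partial>lborel) = (\<integral>x. indicator {-1<..<1::real} x *\<^sub>R F x \<partial>lborel)"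
    by (simp add: set_lebesgue_integral_def)
  also have "\<dots> \<le> (\<integral>x. indicator {-1<..<1::real} x *\<^sub>R K \<partial>lborel)"
  proof (rule integral_mono_AE')
    show "integrable lborel (\<lambda>x. indicator {-1<..<1::real} x *\<^sub>R K)"
      by (intro integrable_scaleR_left integrable_real_indicator) auto
    have "AE x in lborel. x \<notin> T" by (intro AE_not_in countable_imp_null_set_lborel T)
    then show "AE x in lborel. indicator {-1<..<1::real} x *\<^sub>R F x \<le> indicator {-1<..<1::real} x *\<^sub>R K"
      by eventually_elim (auto simp: indicator_def F)
    show "AE x in lborel. 0 \<le> indicator {-1<..<1::real} x *\<^sub>R K" using K0 by (auto simp: indicator_def)
  qed
  also have "\<dots> = 2 * K"
    using set_integral_const[of "{-1<..<1::real}" lborel K] by (simp add: set_lebesgue_integral_def)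
  finally show ?thesis .
qed

lemma norms_le_of_pointwise_bounds:
  fixes w b :: "real \<Rightarrow> real"
  assumes "countable T" and "0 \<le> \<epsilon>" and "0 \<le> P" and "0 \<le> Q"
    and bound: "\<And>x. x \<in> {-1<..<1} \<Longrightarrow> x \<notin> T \<Longrightarrow> \<bar>w x\<bar> \<le> P"
    and deriv_bound: "\<And>x. x \<in> {-1<..<1} \<Longrightarrow> x \<notin> T \<Longrightarrow> \<epsilon> * \<bar>deriv w x\<bar> \<le> Q"
    and b: "\<And>x. x \<in> {-1<..<1} \<Longrightarrow> 0 < b x \<and> b x \<le> b_hi"
  shows "energy_norm \<epsilon> b w \<le> sqrt 2 * (Q + sqrt b_hi * P)"
    and "L2_norm_I w \<le> sqrt 2 * P"
proof -
  have "0 \<le> b_hi" using b[of 0] by auto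
  have sq_bound: "(w x)\<^sup>2 \<le> P\<^sup>2" if "x \<in> {-1<..<1}" "x \<notin> T" for x
    using bound[OF that] by (metis abs_ge_zero power2_abs power_mono)
  have "(\<integral>x\<in>{-1<..<1}. (\<epsilon>\<^sup>2 * (deriv w x)\<^sup>2 + b x * (w x)\<^sup>2) \<partial>lborel) \<le> 2 * (Q\<^sup>2 + b_hi * P\<^sup>2)"
  proof (rule set_integral_Ioo_le_of_bound[OF \<open>countable T\<close>])
    fix x assume x: "x \<in> {-1<..<1}" "x \<notin> T"
    have "\<epsilon>\<^sup>2 * (deriv w x)\<^sup>2 = (\<epsilon> * \<bar>deriv w x\<bar>)\<^sup>2" by (simp add: power_mult_distrib)
    also have "\<dots> \<le> Q\<^sup>2" using deriv_bound[OF x] \<open>0 \<le> \<epsilon>\<close> by (intro power_mono) auto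
    finally show "\<epsilon>\<^sup>2 * (deriv w x)\<^sup>2 + b x * (w x)\<^sup>2 \<le> Q\<^sup>2 + b_hi * P\<^sup>2"
      using b[OF x(1)] sq_bound[OF x] mult_mono[of "b x" b_hi "(w x)\<^sup>2" "P\<^sup>2"] by auto
  qed (use \<open>0 \<le> b_hi\<close> in auto)
  also have "\<dots> \<le> 2 * (Q + sqrt b_hi * P)\<^sup>2"
    using \<open>0 \<le> b_hi\<close> \<open>0 \<le> P\<close> \<open>0 \<le> Q\<close> by (simp add: power2_sum power_mult_distrib)
  finally have "energy_norm \<epsilon> b w \<le> sqrt (2 * (Q + sqrt b_hi * P)\<^sup>2)"
    unfolding energy_norm_def by (rule real_sqrt_le_mono)
  also have "\<dots> = sqrt 2 * (Q + sqrt b_hi * P)"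
    using \<open>0 \<le> b_hi\<close> \<open>0 \<le> P\<close> \<open>0 \<le> Q\<close> by (simp add: real_sqrt_mult)
  finally show "energy_norm \<epsilon> b w \<le> sqrt 2 * (Q + sqrt b_hi * P)" .
  have "(\<integral>x\<in>{-1<..<1}. (w x)\<^sup>2 \<partial>lborel) \<le> 2 * P\<^sup>2"
    by (rule set_integral_Ioo_le_of_bound[OF \<open>countable T\<close> sq_bound]) auto
  then have "L2_norm_I w \<le> sqrt (2 * P\<^sup>2)"
    unfolding L2_norm_I_def by (rule real_sqrt_le_mono)
  also have "\<dots> = sqrt 2 * P" using \<open>0 \<le> P\<close> by (simp add: real_sqrt_mult)
  finally show "L2_norm_I w \<le> sqrt 2 * P" .
qed

section \<open>The Shishkin mesh\<close>

definition shishkin_mesh :: "nat \<Rightarrow> real \<Rightarrow> nat \<Rightarrow> real" where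
  "shishkin_mesh N \<tau> k = (if k \<le> N then -1 + real k * \<tau> / real N
     else if k \<le> 2 * N then -1 + \<tau> + (real k - real N) * (2 - 2 * \<tau>) / real N
     else 1 - \<tau> + (real k - 2 * real N) * \<tau> / real N)"

lemma shishkin_mesh_0: "shishkin_mesh N \<tau> 0 = -1"
  by (simp add: shishkin_mesh_def)

lemma shishkin_mesh_3N: "1 \<le> N \<Longrightarrow> shishkin_mesh N \<tau> (3 * N) = 1"
  by (simp add: shishkin_mesh_def field_simps)

lemma shishkin_mesh_layer_width:
  assumes "1 \<le> N" and "k < N \<or> 2 * N \<le> k"
  shows "shishkin_mesh N \<tau> (Suc k) - shishkin_mesh N \<tau> k = \<tau> / N"
proof -
  have "real N \<noteq> 0" using assms by simp
  then show ?thesis using assms by (cases "k = 2 * N") (auto simp: shishkin_mesh_def field_simps)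
qed

lemma shishkin_mesh_coarse_width:
  assumes "N \<le> k" "k < 2 * N"
  shows "shishkin_mesh N \<tau> (Suc k) - shishkin_mesh N \<tau> k = (2 - 2 * \<tau>) / N"
  using assms by (cases "k = N") (auto simp: shishkin_mesh_def diff_divide_distrib [symmetric] algebra_simps)

lemma shishkin_mesh_coarse_cell:
  assumes "\<tau> \<le> 1" "N \<le> k" "k < 2 * N"
  shows "-1 + \<tau> \<le> shishkin_mesh N \<tau> k" and "shishkin_mesh N \<tau> (Suc k) \<le> 1 - \<tau>"
proof -
  have "0 < real N" using assms by simp
  have "0 \<le> (real k - real N) * (2 - 2 * \<tau>) / real N" using assms by simp
  then show "-1 + \<tau> \<le> shishkin_mesh N \<tau> k"
    using assms by (cases "k = N") (auto simp: shishkin_mesh_def)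
  have "(real (Suc k) - real N) * (2 - 2 * \<tau>) \<le> real N * (2 - 2 * \<tau>)"
    using assms by (intro mult_right_mono) auto
  then have "(real (Suc k) - real N) * (2 - 2 * \<tau>) / real N \<le> 2 - 2 * \<tau>"
    using \<open>0 < real N\<close> by (simp add: divide_le_eq mult.commute)
  then show "shishkin_mesh N \<tau> (Suc k) \<le> 1 - \<tau>"
    using assms by (simp add: shishkin_mesh_def)
qed

lemma shishkin_mesh_strict_mono:
  assumes "1 \<le> N" "0 < \<tau>" "\<tau> < 1"
  shows "strict_mono (shishkin_mesh N \<tau>)"
proof (rule strict_monoI_Suc)
  fix k
  have "0 < \<tau> / N" "0 < (2 - 2 * \<tau>) / N" using assms by auto
  then show "shishkin_mesh N \<tau> k < shishkin_mesh N \<tau> (Suc k)"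
    using shishkin_mesh_layer_width[OF \<open>1 \<le> N\<close>, of k \<tau>] shishkin_mesh_coarse_width[of N k \<tau>]
    by (cases "k < N \<or> 2 * N \<le> k") auto
qed

section \<open>Interpolating the solution on the Shishkin mesh\<close>

locale shishkin_constants =
  fixes \<beta> b_hi A B G :: real
  assumes \<beta>: "0 < \<beta>" and nonneg: "0 \<le> b_hi" "0 \<le> A" "0 \<le> B" "0 \<le> G"
begin

definition V :: real where "V = A + 2 * B"
definition M :: real where "M = b_hi * V"
definition K :: real where "K = 16 * M / \<beta>\<^sup>2 + 4 * M / \<beta> + 16 * (M + G + V)"

lemma constants_nonneg: "0 \<le> V" "0 \<le> M" "0 \<le> K"
  using nonneg \<beta> by (simp_all add: V_def M_def K_def)

end

(* All that the interpolation argument uses of the model problem: u solves eps^2 u'' = b (u - g)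
   with g smooth, and u - g obeys the barrier estimate. *)

locale shishkin_setting = shishkin_constants \<beta> b_hi A B G for \<beta> b_hi A B G :: real +
  fixes \<epsilon> :: real and N :: nat and b u u' u'' g g' g'' :: "real \<Rightarrow> real"
  assumes eps: "0 < \<epsilon>" "\<epsilon> \<le> 1" and N: "2 \<le> N"
    and b_bounds: "\<And>x. x \<in> {-1<..<1} \<Longrightarrow> 0 < b x \<and> b x \<le> b_hi"
    and u_cont: "continuous_on {-1..1} u"
    and u_deriv: "\<And>x. x \<in> {-1<..<1} \<Longrightarrow>
      (u has_real_derivative u' x) (at x) \<and> (u' has_real_derivative u'' x) (at x)"
    and g_deriv: "\<And>x. x \<in> {-1<..<1} \<Longrightarrow> (g has_real_derivative g' x) (at x) \<and>
      (g' has_real_derivative g'' x) (at x) \<and> \<bar>g'' x\<bar> \<le> G"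
    and remainder_bound: "\<And>x. x \<in> {-1..1} \<Longrightarrow>
      \<bar>u x - g x\<bar> \<le> A * \<epsilon>\<^sup>2 + B * boundary_layer \<beta> \<epsilon> x"
    and equation: "\<And>x. x \<in> {-1<..<1} \<Longrightarrow> \<epsilon>\<^sup>2 * u'' x = b x * (u x - g x)"
begin

definition rate :: real where "rate = ln N / N"
definition \<tau> :: real where "\<tau> = min (1/2) (2 * \<epsilon> * ln N / \<beta>)"

abbreviation t :: "nat \<Rightarrow> real" where "t \<equiv> shishkin_mesh N \<tau>"

lemma rate_bounds: "0 < rate" "rate \<le> 1" "1 / N \<le> 2 * rate" "1 / N\<^sup>2 \<le> 4 * rate\<^sup>2"
proof -
  have "2 \<le> real N" using N by simp
  then have "ln 2 \<le> ln N" by simp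
  then have "2 / 3 \<le> ln N" using ln2_ge_two_thirds by linarith
  then show "0 < rate" "1 / N \<le> 2 * rate" using \<open>2 \<le> real N\<close> by (auto simp: rate_def divide_right_mono)
  have "1 / N\<^sup>2 = (1 / N)\<^sup>2" by (simp add: power_divide)
  also have "\<dots> \<le> (2 * rate)\<^sup>2" using \<open>1 / N \<le> 2 * rate\<close> by (intro power_mono) auto
  finally show "1 / N\<^sup>2 \<le> 4 * rate\<^sup>2" by (simp add: power_mult_distrib)
  show "rate \<le> 1" using ln_le_minus_one[of "real N"] \<open>2 \<le> real N\<close> by (simp add: rate_def)
qed

lemma \<tau>_bounds: "0 < \<tau>" "\<tau> \<le> 1/2"
  using eps \<beta> N by (simp_all add: \<tau>_def)

lemma mesh_strict_mono: "strict_mono t"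
  using \<tau>_bounds N by (intro shishkin_mesh_strict_mono) auto

lemma mesh_cell_bounds: "k < 3 * N \<Longrightarrow> -1 \<le> t k \<and> t (Suc k) \<le> 1"
  using strict_mono_less_eq[OF mesh_strict_mono, of 0 k]
    strict_mono_less_eq[OF mesh_strict_mono, of "Suc k" "3 * N"] shishkin_mesh_0 shishkin_mesh_3N N
  by auto

lemma remainder_le_V: "x \<in> {-1..1} \<Longrightarrow> \<bar>u x - g x\<bar> \<le> V"
proof -
  assume x: "x \<in> {-1..1}"
  have "A * \<epsilon>\<^sup>2 \<le> A" using nonneg eps by (simp add: mult_left_le power_le_one)
  moreover have "B * boundary_layer \<beta> \<epsilon> x \<le> B * 2"
    using boundary_layer_le[of \<beta> \<epsilon> 0 x] x \<beta> eps nonneg by (intro mult_left_mono) auto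
  ultimately show ?thesis using remainder_bound[OF x] by (simp add: V_def)
qed

lemma curvature_bound:
  assumes "x \<in> {-1<..<1}"
  shows "\<epsilon>\<^sup>2 * \<bar>u'' x\<bar> \<le> b_hi * \<bar>u x - g x\<bar>"
proof -
  have "\<epsilon>\<^sup>2 * \<bar>u'' x\<bar> = \<bar>\<epsilon>\<^sup>2 * u'' x\<bar>" by (simp add: abs_mult)
  also have "\<dots> = b x * \<bar>u x - g x\<bar>"
    unfolding equation[OF assms] using b_bounds[OF assms] by (simp add: abs_mult)
  also have "\<dots> \<le> b_hi * \<bar>u x - g x\<bar>" using b_bounds[OF assms] by (simp add: mult_right_mono)
  finally show ?thesis .
qed

lemma scaled_u''_le_M:
  assumes "x \<in> {-1<..<1}"
  shows "\<epsilon>\<^sup>2 * \<bar>u'' x\<bar> \<le> M"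
proof -
  have "b_hi * \<bar>u x - g x\<bar> \<le> b_hi * V"
    using remainder_le_V[of x] assms nonneg by (intro mult_left_mono) auto
  then show ?thesis using curvature_bound[OF assms] by (simp add: M_def)
qed

lemma mesh_cell_nonempty: "t k < t (Suc k)"
  using mesh_strict_mono by (simp add: strict_mono_def)

lemma mesh_cell_in_interval: "k < 3 * N \<Longrightarrow> x \<in> {t k<..<t (Suc k)} \<Longrightarrow> x \<in> {-1<..<1}"
  using mesh_cell_bounds[of k] by auto

lemma layer_cell_width:
  assumes "k < N \<or> 2 * N \<le> k \<or> \<tau> = 1/2"
  shows "(t (Suc k) - t k) / \<epsilon> \<le> 4 * rate / \<beta>"
proof (cases "k < N \<or> 2 * N \<le> k")
  case True
  then have "t (Suc k) - t k = \<tau> / N" using N by (intro shishkin_mesh_layer_width) auto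
  also have "\<dots> \<le> (2 * \<epsilon> * ln N / \<beta>) / N" by (intro divide_right_mono) (auto simp: \<tau>_def)
  finally have "(t (Suc k) - t k) / \<epsilon> \<le> 2 * rate / \<beta>"
    using eps by (simp add: rate_def divide_le_eq field_simps)
  also have "\<dots> \<le> 4 * rate / \<beta>" using rate_bounds(1) \<beta> by (simp add: divide_right_mono)
  finally show ?thesis .
next
  case False
  then have "\<tau> = 1/2" "N \<le> k" "k < 2 * N" using assms by auto
  then have "t (Suc k) - t k = 1 / N" by (simp add: shishkin_mesh_coarse_width)
  moreover have "\<beta> \<le> 4 * \<epsilon> * ln N"
    using \<open>\<tau> = 1/2\<close> \<beta> by (auto simp: \<tau>_def min_def field_simps split: if_splits)
  ultimately show ?thesis using eps \<beta> N by (simp add: rate_def field_simps)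
qed

lemma layer_cell_error:
  assumes k: "k < 3 * N" and width: "(t (Suc k) - t k) / \<epsilon> \<le> 4 * rate / \<beta>"
    and x: "x \<in> {t k<..<t (Suc k)}"
  shows "\<bar>u x - linear_interpolant u (t k) (t (Suc k)) x\<bar> \<le> 16 * M / \<beta>\<^sup>2 * rate\<^sup>2"
    and "\<epsilon> * \<bar>u' x - (u (t (Suc k)) - u (t k)) / (t (Suc k) - t k)\<bar> \<le> 4 * M / \<beta> * rate"
proof -
  define h where "h = t (Suc k) - t k"
  have "0 \<le> h / \<epsilon>" using mesh_cell_nonempty[of k] eps by (simp add: h_def)
  have cont: "continuous_on {t k..t (Suc k)} u"
    using mesh_cell_bounds[OF k] by (intro continuous_on_subset[OF u_cont]) auto
  have deriv: "(u has_real_derivative u' z) (at z) \<and> (u' has_real_derivative u'' z) (at z) \<and>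
      \<bar>u'' z\<bar> \<le> M / \<epsilon>\<^sup>2" if "z \<in> {t k<..<t (Suc k)}" for z
    using mesh_cell_in_interval[OF k that] u_deriv scaled_u''_le_M eps by (auto simp: field_simps)
  have "\<bar>u x - linear_interpolant u (t k) (t (Suc k)) x\<bar> \<le> M / \<epsilon>\<^sup>2 * h\<^sup>2"
    using linear_interpolation_error(2)[OF mesh_cell_nonempty cont deriv] x by (auto simp: h_def)
  also have "\<dots> = M * (h / \<epsilon>)\<^sup>2" by (simp add: power_divide)
  also have "\<dots> \<le> M * (4 * rate / \<beta>)\<^sup>2"
    using width \<open>0 \<le> h / \<epsilon>\<close> constants_nonneg by (intro mult_left_mono power_mono) (auto simp: h_def)
  also have "\<dots> = 16 * M / \<beta>\<^sup>2 * rate\<^sup>2" by (simp add: power_divide power_mult_distrib)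
  finally show "\<bar>u x - linear_interpolant u (t k) (t (Suc k)) x\<bar> \<le> 16 * M / \<beta>\<^sup>2 * rate\<^sup>2" .
  have "\<bar>u' x - (u (t (Suc k)) - u (t k)) / h\<bar> \<le> M / \<epsilon>\<^sup>2 * h"
    using linear_interpolation_error(1)[OF mesh_cell_nonempty cont deriv] x by (auto simp: h_def)
  then have "\<epsilon> * \<bar>u' x - (u (t (Suc k)) - u (t k)) / h\<bar> \<le> M * (h / \<epsilon>)"
    using eps by (simp add: field_simps power2_eq_square)
  also have "\<dots> \<le> M * (4 * rate / \<beta>)"
    using width constants_nonneg by (intro mult_left_mono) (auto simp: h_def)
  also have "\<dots> = 4 * M / \<beta> * rate" by simp
  finally show "\<epsilon> * \<bar>u' x - (u (t (Suc k)) - u (t k)) / (t (Suc k) - t k)\<bar> \<le> 4 * M / \<beta> * rate"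
    by (simp add: h_def)
qed

lemma coarse_cell:
  assumes "N \<le> k" "k < 2 * N"
  shows "-1 + \<tau> \<le> t k" and "t (Suc k) \<le> 1 - \<tau>" and "t (Suc k) - t k \<le> 2 / N"
proof -
  show "-1 + \<tau> \<le> t k" "t (Suc k) \<le> 1 - \<tau>"
    using shishkin_mesh_coarse_cell[OF _ assms] \<tau>_bounds by auto
  have "t (Suc k) - t k = (2 - 2 * \<tau>) / N" by (rule shishkin_mesh_coarse_width[OF assms])
  then show "t (Suc k) - t k \<le> 2 / N" using \<tau>_bounds by (simp add: divide_right_mono)
qed

lemma coarse_region_in_interval: "z \<in> {-1 + \<tau>..1 - \<tau>} \<Longrightarrow> z \<in> {-1<..<1}"
  using \<tau>_bounds by auto

context
  assumes \<tau>_eq: "\<tau> = 2 * \<epsilon> * ln N / \<beta>"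
begin

lemma remainder_small_in_coarse_region:
  assumes z: "z \<in> {-1 + \<tau>..1 - \<tau>}"
  shows "\<bar>u z - g z\<bar> \<le> A * \<epsilon>\<^sup>2 + 2 * B / N\<^sup>2"
proof -
  have "- \<beta> * \<tau> / \<epsilon> = - ln (real N ^ 2)" using \<tau>_eq eps \<beta> N by (simp add: ln_realpow)
  then have "exp (- \<beta> * \<tau> / \<epsilon>) = 1 / N\<^sup>2"
    using N by (simp add: exp_minus inverse_eq_divide)
  then have "B * boundary_layer \<beta> \<epsilon> z \<le> B * (2 / N\<^sup>2)"
    using boundary_layer_le[of \<beta> \<epsilon> \<tau> z] z \<beta> eps nonneg by (intro mult_left_mono) auto
  moreover have "z \<in> {-1..1}" using z \<tau>_bounds by auto
  ultimately show ?thesis using remainder_bound[of z] by (simp add: mult.commute)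
qed

lemma u''_le_M_in_coarse_region:
  assumes "1 / N \<le> \<epsilon>" and z: "z \<in> {-1 + \<tau>..1 - \<tau>}"
  shows "\<bar>u'' z\<bar> \<le> M"
proof -
  have "1 / N\<^sup>2 \<le> \<epsilon>\<^sup>2"
    using \<open>1 / N \<le> \<epsilon>\<close> power_mono[of "1 / N" \<epsilon> 2] by (simp add: power_divide)
  then have "A * \<epsilon>\<^sup>2 + 2 * B / N\<^sup>2 \<le> V * \<epsilon>\<^sup>2"
    using nonneg mult_left_mono[of "1 / N\<^sup>2" "\<epsilon>\<^sup>2" "2 * B"] by (simp add: V_def algebra_simps)
  then have "b_hi * \<bar>u z - g z\<bar> \<le> b_hi * (V * \<epsilon>\<^sup>2)"
    using remainder_small_in_coarse_region[OF z] nonneg(1) by (intro mult_left_mono) auto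
  then have "\<epsilon>\<^sup>2 * \<bar>u'' z\<bar> \<le> \<epsilon>\<^sup>2 * M"
    using curvature_bound[OF coarse_region_in_interval[OF z]] by (simp add: M_def mult_ac)
  then show ?thesis using eps by simp
qed

lemma coarse_cell_error_large_eps:
  assumes k: "N \<le> k" "k < 2 * N" and "1 / N \<le> \<epsilon>" and x: "x \<in> {t k<..<t (Suc k)}"
  shows "\<bar>u x - linear_interpolant u (t k) (t (Suc k)) x\<bar> \<le> 16 * M * rate\<^sup>2"
    and "\<epsilon> * \<bar>u' x - (u (t (Suc k)) - u (t k)) / (t (Suc k) - t k)\<bar> \<le> 4 * M * rate"
proof -
  define h where "h = t (Suc k) - t k"
  have "0 < h" "h \<le> 2 / N" using mesh_cell_nonempty[of k] coarse_cell(3)[OF k] by (simp_all add: h_def)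
  have cont: "continuous_on {t k..t (Suc k)} u"
    using coarse_cell[OF k] \<tau>_bounds by (intro continuous_on_subset[OF u_cont]) auto
  have deriv: "(u has_real_derivative u' z) (at z) \<and> (u' has_real_derivative u'' z) (at z) \<and>
      \<bar>u'' z\<bar> \<le> M" if "z \<in> {t k<..<t (Suc k)}" for z
  proof -
    have "z \<in> {-1 + \<tau>..1 - \<tau>}" using that coarse_cell[OF k] by auto
    then show ?thesis
      using u''_le_M_in_coarse_region[OF \<open>1 / N \<le> \<epsilon>\<close>] u_deriv coarse_region_in_interval by blast
  qed
  have "\<bar>u x - linear_interpolant u (t k) (t (Suc k)) x\<bar> \<le> M * h\<^sup>2"
    using linear_interpolation_error(2)[OF mesh_cell_nonempty cont deriv] x by (auto simp: h_def)
  also have "\<dots> \<le> M * (2 / N)\<^sup>2"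
    using \<open>0 < h\<close> \<open>h \<le> 2 / N\<close> constants_nonneg by (intro mult_left_mono power_mono) auto
  also have "\<dots> = 4 * M * (1 / N\<^sup>2)" by (simp add: power_divide)
  also have "\<dots> \<le> 4 * M * (4 * rate\<^sup>2)"
    using rate_bounds constants_nonneg by (intro mult_left_mono) auto
  finally show "\<bar>u x - linear_interpolant u (t k) (t (Suc k)) x\<bar> \<le> 16 * M * rate\<^sup>2" by simp
  have "\<bar>u' x - (u (t (Suc k)) - u (t k)) / h\<bar> \<le> M * h"
    using linear_interpolation_error(1)[OF mesh_cell_nonempty cont deriv] x by (auto simp: h_def)
  then have "\<epsilon> * \<bar>u' x - (u (t (Suc k)) - u (t k)) / h\<bar> \<le> M * h"
    using eps by (meson abs_ge_zero less_imp_le mult_left_le_one_le order_trans)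
  also have "\<dots> \<le> M * (2 / N)" using \<open>h \<le> 2 / N\<close> constants_nonneg by (intro mult_left_mono) auto
  also have "\<dots> = 2 * M * (1 / N)" by simp
  also have "\<dots> \<le> 2 * M * (2 * rate)" using rate_bounds constants_nonneg by (intro mult_left_mono) auto
  finally show "\<epsilon> * \<bar>u' x - (u (t (Suc k)) - u (t k)) / (t (Suc k) - t k)\<bar> \<le> 4 * M * rate"
    by (simp add: h_def)
qed

(* For eps < 1/N we split u = g + (u - g): on the coarse region the remainder and its derivative
   scaled by eps are of order 1/N^2, the latter by Landau's inequality on intervals of length eps. *)

context
  assumes small_eps: "\<epsilon> < 1 / N"
begin

lemma eps_sq_le: "\<epsilon>\<^sup>2 \<le> 1 / N\<^sup>2"
  using small_eps eps power_mono[of \<epsilon> "1 / N" 2] by (simp add: power_divide)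

lemma small_remainder:
  assumes "z \<in> {-1 + \<tau>..1 - \<tau>}"
  shows "\<bar>u z - g z\<bar> \<le> V / N\<^sup>2"
proof -
  have "A * \<epsilon>\<^sup>2 \<le> A * (1 / N\<^sup>2)" using eps_sq_le nonneg(2) by (rule mult_left_mono)
  then show ?thesis
    using remainder_small_in_coarse_region[OF assms] by (simp add: V_def add_divide_distrib)
qed

lemma small_remainder'':
  assumes z: "z \<in> {-1 + \<tau>..1 - \<tau>}"
  shows "\<epsilon>\<^sup>2 * \<bar>u'' z - g'' z\<bar> \<le> (M + G) / N\<^sup>2"
proof -
  have "\<epsilon>\<^sup>2 * \<bar>u'' z\<bar> \<le> b_hi * (V / N\<^sup>2)"
    using curvature_bound[OF coarse_region_in_interval[OF z]]
      mult_left_mono[OF small_remainder[OF z] nonneg(1)] by linarith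
  moreover have "\<epsilon>\<^sup>2 * \<bar>g'' z\<bar> \<le> 1 / N\<^sup>2 * G"
    using eps_sq_le g_deriv[OF coarse_region_in_interval[OF z]] by (intro mult_mono) auto
  moreover have "\<epsilon>\<^sup>2 * \<bar>u'' z - g'' z\<bar> \<le> \<epsilon>\<^sup>2 * \<bar>u'' z\<bar> + \<epsilon>\<^sup>2 * \<bar>g'' z\<bar>"
    using abs_triangle_ineq4[of "u'' z" "g'' z"] by (simp add: distrib_left[symmetric] mult_left_mono)
  ultimately show ?thesis by (simp add: M_def add_divide_distrib)
qed

lemma small_remainder':
  assumes z: "z \<in> {-1 + \<tau>..1 - \<tau>}"
  shows "\<epsilon> * \<bar>u' z - g' z\<bar> \<le> (2 * V + M + G) / N\<^sup>2"
proof -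
  have "1 / N \<le> 1 / 2" using N by auto
  then have "z + \<epsilon> \<le> 1 - \<tau> \<or> -1 + \<tau> \<le> z - \<epsilon>"
    using z small_eps \<tau>_bounds by (cases "z \<le> 0") auto
  moreover have "((\<lambda>z. u z - g z) has_real_derivative u' y - g' y) (at y) \<and>
      ((\<lambda>z. u' z - g' z) has_real_derivative u'' y - g'' y) (at y)" if "y \<in> {-1 + \<tau>..1 - \<tau>}" for y
    using u_deriv g_deriv coarse_region_in_interval[OF that] by (auto intro!: derivative_eq_intros)
  ultimately have "\<epsilon> * \<bar>u' z - g' z\<bar> \<le> 2 * (V / N\<^sup>2) + (M + G) / N\<^sup>2"
    by (intro landau_deriv_bound_scaled[where \<phi> = "\<lambda>z. u z - g z" and \<phi>' = "\<lambda>z. u' z - g' z"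
          and \<phi>'' = "\<lambda>z. u'' z - g'' z", OF eps(1) z]) (use small_remainder small_remainder'' in auto)
  then show ?thesis by (simp add: add_divide_distrib)
qed

lemma coarse_cell_error_small_eps:
  assumes k: "N \<le> k" "k < 2 * N" and x: "x \<in> {t k<..<t (Suc k)}"
  shows "\<bar>u x - linear_interpolant u (t k) (t (Suc k)) x\<bar> \<le> 16 * (G + V) * rate\<^sup>2"
    and "\<epsilon> * \<bar>u' x - (u (t (Suc k)) - u (t k)) / (t (Suc k) - t k)\<bar> \<le> 8 * (M + G + V) * rate"
proof -
  define h where "h = t (Suc k) - t k"
  have "0 < h" "h \<le> 2 / N" using mesh_cell_nonempty[of k] coarse_cell(3)[OF k] by (simp_all add: h_def)
  have region: "z \<in> {-1 + \<tau>..1 - \<tau>}" if "z \<in> {t k..t (Suc k)}" for z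
    using that coarse_cell[OF k] by auto
  have "real N \<le> (real N)\<^sup>2" using N by (simp add: power2_eq_square)
  then have "1 / N\<^sup>2 \<le> 1 / N" using N by (intro divide_left_mono) auto
  have "\<bar>u x - linear_interpolant u (t k) (t (Suc k)) x\<bar> \<le> G * h\<^sup>2 + 4 * (V / N\<^sup>2)"
    unfolding h_def
    by (rule linear_interpolation_error_smooth_plus_small[where g' = g' and g'' = g'',
          OF mesh_cell_nonempty])
      (use x region g_deriv coarse_region_in_interval small_remainder in auto)
  also have "\<dots> \<le> G * (2 / N)\<^sup>2 + 4 * (V / N\<^sup>2)"
    using \<open>0 < h\<close> \<open>h \<le> 2 / N\<close> nonneg by (simp add: mult_left_mono power_mono)
  also have "\<dots> = 4 * (G + V) * (1 / N\<^sup>2)" by (simp add: power_divide algebra_simps)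
  also have "\<dots> \<le> 4 * (G + V) * (4 * rate\<^sup>2)"
    using rate_bounds constants_nonneg nonneg by (intro mult_left_mono) auto
  finally show "\<bar>u x - linear_interpolant u (t k) (t (Suc k)) x\<bar> \<le> 16 * (G + V) * rate\<^sup>2"
    by (simp add: algebra_simps)
  have "\<epsilon> * \<bar>u' x - (u (t (Suc k)) - u (t k)) / h\<bar> \<le> \<epsilon> * G * h + 2 * ((2 * V + M + G) / N\<^sup>2)"
    unfolding h_def
    by (rule linear_interpolation_deriv_error_smooth_plus_small[where g = g and g'' = g'',
          OF mesh_cell_nonempty less_imp_le[OF eps(1)]])
      (use x region u_deriv g_deriv coarse_region_in_interval small_remainder' in auto)
  also have "\<dots> \<le> G * (2 / N) + 2 * ((2 * V + M + G) * (1 / N))"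
  proof -
    have "\<epsilon> * G * h \<le> 1 * G * (2 / N)"
      using eps nonneg \<open>0 < h\<close> \<open>h \<le> 2 / N\<close> by (intro mult_mono) auto
    moreover have "(2 * V + M + G) * (1 / N\<^sup>2) \<le> (2 * V + M + G) * (1 / N)"
      using \<open>1 / N\<^sup>2 \<le> 1 / N\<close> constants_nonneg nonneg by (intro mult_left_mono) auto
    then have "(2 * V + M + G) / N\<^sup>2 \<le> (2 * V + M + G) * (1 / N)" by simp
    ultimately show ?thesis by linarith
  qed
  also have "\<dots> \<le> (4 * G + 4 * V + 2 * M) * (2 * rate)"
    using rate_bounds constants_nonneg nonneg mult_left_mono[of "1 / N" "2 * rate" "4 * G + 4 * V + 2 * M"]
    by (simp add: algebra_simps)
  also have "\<dots> \<le> 8 * (M + G + V) * rate"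
    using rate_bounds constants_nonneg nonneg by (simp add: algebra_simps)
  finally show "\<epsilon> * \<bar>u' x - (u (t (Suc k)) - u (t k)) / (t (Suc k) - t k)\<bar> \<le> 8 * (M + G + V) * rate"
    by (simp add: h_def)
qed

end

end

lemma cell_error:
  assumes k: "k < 3 * N" and x: "x \<in> {t k<..<t (Suc k)}"
  shows "\<bar>u x - linear_interpolant u (t k) (t (Suc k)) x\<bar> \<le> K * rate\<^sup>2"
    and "\<epsilon> * \<bar>u' x - (u (t (Suc k)) - u (t k)) / (t (Suc k) - t k)\<bar> \<le> K * rate"
proof -
  have weaken: "X \<le> c * r \<Longrightarrow> c \<le> K \<Longrightarrow> 0 \<le> r \<Longrightarrow> X \<le> K * r" for X c r :: real
    by (meson mult_right_mono order_trans)
  have "0 \<le> M / \<beta>\<^sup>2" "0 \<le> M / \<beta>" using constants_nonneg \<beta> by simp_all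
  then have K: "16 * M / \<beta>\<^sup>2 \<le> K" "4 * M / \<beta> \<le> K" "16 * M \<le> K" "4 * M \<le> K"
      "16 * (G + V) \<le> K" "8 * (M + G + V) \<le> K"
    using constants_nonneg nonneg by (simp_all add: K_def)
  have rate: "0 \<le> rate" "0 \<le> rate\<^sup>2" using rate_bounds by simp_all
  consider (layer) "k < N \<or> 2 * N \<le> k \<or> \<tau> = 1/2"
    | (coarse) "N \<le> k" "k < 2 * N" "\<tau> = 2 * \<epsilon> * ln N / \<beta>"
    by (cases "k < N \<or> 2 * N \<le> k \<or> \<tau> = 1/2") (auto simp: \<tau>_def min_def split: if_splits)
  then have "\<bar>u x - linear_interpolant u (t k) (t (Suc k)) x\<bar> \<le> K * rate\<^sup>2 \<and>
    \<epsilon> * \<bar>u' x - (u (t (Suc k)) - u (t k)) / (t (Suc k) - t k)\<bar> \<le> K * rate"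
  proof cases
    case layer
    note error = layer_cell_error[OF k layer_cell_width[OF layer] x]
    show ?thesis using weaken[OF error(1) K(1) rate(2)] weaken[OF error(2) K(2) rate(1)] ..
  next
    case coarse
    show ?thesis
    proof (cases "1 / N \<le> \<epsilon>")
      case True
      note error = coarse_cell_error_large_eps[OF coarse(3) coarse(1,2) True x]
      show ?thesis using weaken[OF error(1) K(3) rate(2)] weaken[OF error(2) K(4) rate(1)] ..
    next
      case False
      then have "\<epsilon> < 1 / N" by simp
      note error = coarse_cell_error_small_eps[OF coarse(3) this coarse(1,2) x]
      show ?thesis using weaken[OF error(1) K(5) rate(2)] weaken[OF error(2) K(6) rate(1)] ..
    qed
  qed
  then show "\<bar>u x - linear_interpolant u (t k) (t (Suc k)) x\<bar> \<le> K * rate\<^sup>2"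
    and "\<epsilon> * \<bar>u' x - (u (t (Suc k)) - u (t k)) / (t (Suc k) - t k)\<bar> \<le> K * rate"
    by auto
qed

definition interpolation_net :: network where "interpolation_net = pl_net t (\<lambda>k. u (t k)) (3 * N)"

lemma interpolation_net_in_NN: "interpolation_net \<in> NN 2 (3 * N) 1 1"
  unfolding interpolation_net_def using N by (intro pl_net_in_NN) auto

lemma interpolation_net_error:
  assumes "x \<in> {-1<..<1}" and "x \<notin> range t"
  shows "\<bar>u x - R interpolation_net x\<bar> \<le> K * rate\<^sup>2"
    and "\<epsilon> * \<bar>deriv (\<lambda>x. u x - R interpolation_net x) x\<bar> \<le> K * rate"
proof -
  obtain k where k: "k < 3 * N" "t k \<le> x" "x < t (Suc k)"
    using exists_cell_containing[of t x "3 * N"] assms(1) N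
    by (auto simp: shishkin_mesh_0 shishkin_mesh_3N)
  have "t k \<noteq> x" using assms(2) by auto
  then have x: "x \<in> {t k<..<t (Suc k)}" using k by auto
  have "R interpolation_net x = linear_interpolant u (t k) (t (Suc k)) x"
    unfolding interpolation_net_def using R_pl_net_on_cell[OF mesh_strict_mono k(1)] k
    by (simp add: slope_def linear_interpolant_def)
  moreover have "(R interpolation_net has_real_derivative
      (u (t (Suc k)) - u (t k)) / (t (Suc k) - t k)) (at x)"
    unfolding interpolation_net_def
    using R_pl_net_has_deriv[OF mesh_strict_mono k(1), of x "\<lambda>k. u (t k)"] x by (simp add: slope_def)
  then have "deriv (\<lambda>x. u x - R interpolation_net x) x
      = u' x - (u (t (Suc k)) - u (t k)) / (t (Suc k) - t k)"
    using u_deriv[OF assms(1)] by (intro DERIV_imp_deriv) (auto intro!: derivative_eq_intros)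
  ultimately show "\<bar>u x - R interpolation_net x\<bar> \<le> K * rate\<^sup>2"
    and "\<epsilon> * \<bar>deriv (\<lambda>x. u x - R interpolation_net x) x\<bar> \<le> K * rate"
    using cell_error[OF k(1) x] by simp_all
qed

lemma interpolation_net_INF_bounds:
  assumes C: "sqrt 2 * (1 + sqrt b_hi) * K \<le> C"
  shows "(INF \<Phi>\<in>NN 2 (nat \<lfloor>3 * real N\<rfloor>) 1 1. ereal (energy_norm \<epsilon> b (\<lambda>x. u x - R \<Phi> x)))
      \<le> ereal (C * ln (real N) / real N)"
    and "(INF \<Phi>\<in>NN 2 (nat \<lfloor>3 * real N\<rfloor>) 1 1. ereal (L2_norm_I (\<lambda>x. u x - R \<Phi> x)))
      \<le> ereal (C * (ln (real N) / real N)\<^sup>2)"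
proof -
  have "nat \<lfloor>3 * real N\<rfloor> = 3 * N" by (metis floor_of_nat nat_int of_nat_mult of_nat_numeral)
  then have net: "interpolation_net \<in> NN 2 (nat \<lfloor>3 * real N\<rfloor>) 1 1"
    using interpolation_net_in_NN by simp
  have "0 \<le> K * rate\<^sup>2" "0 \<le> K * rate" using constants_nonneg rate_bounds by simp_all
  note norms = norms_le_of_pointwise_bounds[where T = "range t" and b = b and b_hi = b_hi, OF _
      less_imp_le[OF eps(1)] \<open>0 \<le> K * rate\<^sup>2\<close> \<open>0 \<le> K * rate\<close>]
  have "K * rate\<^sup>2 \<le> K * rate"
    using constants_nonneg rate_bounds
    by (intro mult_left_mono) (auto simp: power2_eq_square mult_le_cancel_left1)
  then have "sqrt b_hi * (K * rate\<^sup>2) \<le> sqrt b_hi * (K * rate)"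
    by (rule mult_left_mono) (use nonneg(1) in simp)
  then have "K * rate + sqrt b_hi * (K * rate\<^sup>2) \<le> (1 + sqrt b_hi) * K * rate"
    by (simp add: algebra_simps)
  then have "sqrt 2 * (K * rate + sqrt b_hi * (K * rate\<^sup>2)) \<le> sqrt 2 * (1 + sqrt b_hi) * K * rate"
    by (simp add: mult.assoc)
  also have "\<dots> \<le> C * rate" using C rate_bounds by (simp add: mult_right_mono)
  finally have "energy_norm \<epsilon> b (\<lambda>x. u x - R interpolation_net x) \<le> C * rate"
    using norms(1) interpolation_net_error b_bounds by fastforce
  then show "(INF \<Phi>\<in>NN 2 (nat \<lfloor>3 * real N\<rfloor>) 1 1. ereal (energy_norm \<epsilon> b (\<lambda>x. u x - R \<Phi> x)))
      \<le> ereal (C * ln (real N) / real N)"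
    by (intro INF_lower2[OF net]) (simp add: rate_def)
  have "sqrt 2 * K \<le> sqrt 2 * (1 + sqrt b_hi) * K"
    using constants_nonneg nonneg(1) by (simp add: mult_left_mono mult_right_mono)
  with C have "sqrt 2 * K \<le> C" by linarith
  then have "sqrt 2 * (K * rate\<^sup>2) \<le> C * rate\<^sup>2" using rate_bounds by (simp add: mult_right_mono)
  then have "L2_norm_I (\<lambda>x. u x - R interpolation_net x) \<le> C * rate\<^sup>2"
    using norms(2) interpolation_net_error b_bounds by fastforce
  then show "(INF \<Phi>\<in>NN 2 (nat \<lfloor>3 * real N\<rfloor>) 1 1. ereal (L2_norm_I (\<lambda>x. u x - R \<Phi> x)))
      \<le> ereal (C * (ln (real N) / real N)\<^sup>2)"
    by (intro INF_lower2[OF net]) (simp add: rate_def)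
qed

end

lemma solution_shishkin_setting:
  fixes b f g g' g'' u :: "real \<Rightarrow> real"
  assumes "0 < b_lo" and b: "\<forall>x\<in>{-1..1}. b_lo \<le> b x \<and> b x \<le> b_hi"
    and g: "\<forall>x\<in>{-1..1}. b x * g x = f x" and g_cont: "continuous_on {-1..1} g"
    and g_deriv: "\<forall>x\<in>{-1<..<1}. (g has_real_derivative g' x) (at x) \<and>
      (g' has_real_derivative g'' x) (at x) \<and> \<bar>g'' x\<bar> \<le> G"
    and eps: "0 < \<epsilon>" "\<epsilon> \<le> 1" and N: "2 \<le> N" and sol: "is_solution \<epsilon> b f u"
  obtains u' u'' where "shishkin_setting (sqrt b_lo) b_hi (G / b_lo) (\<bar>g (-1)\<bar> + \<bar>g 1\<bar>) G \<epsilon> N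
    b u u' u'' g g' g''"
proof -
  obtain u' u'' where u_cont: "continuous_on {-1..1} u" and "u (-1) = 0" "u 1 = 0"
    and u: "\<And>x. x \<in> {-1<..<1} \<Longrightarrow> (u has_real_derivative u' x) (at x) \<and>
      (u' has_real_derivative u'' x) (at x) \<and> - \<epsilon>\<^sup>2 * u'' x + b x * u x = f x"
    using sol unfolding is_solution_def by blast
  have "0 \<le> G" using bspec[OF g_deriv, of 0] by force
  have "0 \<le> b_hi" using b \<open>0 < b_lo\<close> by force
  have b_bounds: "0 < b x \<and> b x \<le> b_hi" if "x \<in> {-1<..<1}" for x
  proof -
    have "b_lo \<le> b x \<and> b x \<le> b_hi" using b that by auto
    then show ?thesis using \<open>0 < b_lo\<close> by linarith
  qed
  have equation: "\<epsilon>\<^sup>2 * u'' x = b x * (u x - g x)" if "x \<in> {-1<..<1}" for x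
    using u[OF that] g that by (simp add: algebra_simps)
  have "\<bar>u x - g x\<bar> \<le> G / b_lo * \<epsilon>\<^sup>2 + (\<bar>g (-1)\<bar> + \<bar>g 1\<bar>) * boundary_layer (sqrt b_lo) \<epsilon> x"
    if "x \<in> {-1..1}" for x
  proof (rule reaction_diffusion_barrier[OF \<open>0 < b_lo\<close> _ eps(1) _ _ _ _ _ _ that,
        where v' = "\<lambda>x. u' x - g' x" and v'' = "\<lambda>x. u'' x - g'' x" and q = g''])
    show "continuous_on {-1..1} (\<lambda>x. u x - g x)" by (intro continuous_intros u_cont g_cont)
    fix y :: real assume y: "y \<in> {-1<..<1}"
    then show "((\<lambda>x. u x - g x) has_real_derivative u' y - g' y) (at y) \<and>
        ((\<lambda>x. u' x - g' x) has_real_derivative u'' y - g'' y) (at y)"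
      using u g_deriv by (auto intro!: derivative_eq_intros)
    show "- \<epsilon>\<^sup>2 * (u'' y - g'' y) + b y * (u y - g y) = \<epsilon>\<^sup>2 * g'' y"
      using equation[OF y] by (simp add: algebra_simps)
  qed (use b g_deriv \<open>u (-1) = 0\<close> \<open>u 1 = 0\<close> in auto)
  then have "shishkin_setting (sqrt b_lo) b_hi (G / b_lo) (\<bar>g (-1)\<bar> + \<bar>g 1\<bar>) G \<epsilon> N
      b u u' u'' g g' g''"
    using eps N \<open>0 < b_lo\<close> \<open>0 \<le> b_hi\<close> \<open>0 \<le> G\<close> b_bounds u_cont u g_deriv equation
    by unfold_locales auto
  then show ?thesis using that by blast
qed

lemma solution_interpolation_bounds:
  fixes b f g g' g'' u :: "real \<Rightarrow> real"
  assumes "0 < b_lo" and b: "\<forall>x\<in>{-1..1}. b_lo \<le> b x \<and> b x \<le> b_hi"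
    and g: "\<forall>x\<in>{-1..1}. b x * g x = f x" and g_cont: "continuous_on {-1..1} g"
    and g_deriv: "\<forall>x\<in>{-1<..<1}. (g has_real_derivative g' x) (at x) \<and>
      (g' has_real_derivative g'' x) (at x) \<and> \<bar>g'' x\<bar> \<le> G"
    and C: "sqrt 2 * (1 + sqrt b_hi) * shishkin_constants.K (sqrt b_lo) b_hi (G / b_lo)
      (\<bar>g (-1)\<bar> + \<bar>g 1\<bar>) G \<le> C"
    and "0 < \<epsilon>" "\<epsilon> \<le> 1" "2 \<le> N" "is_solution \<epsilon> b f u"
  shows "(INF \<Phi>\<in>NN 2 (nat \<lfloor>3 * real N\<rfloor>) 1 1. ereal (energy_norm \<epsilon> b (\<lambda>x. u x - R \<Phi> x)))
      \<le> ereal (C * ln (real N) / real N) \<and>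
    (INF \<Phi>\<in>NN 2 (nat \<lfloor>3 * real N\<rfloor>) 1 1. ereal (L2_norm_I (\<lambda>x. u x - R \<Phi> x)))
      \<le> ereal (C * (ln (real N) / real N)\<^sup>2)"
proof -
  obtain u' u'' where "shishkin_setting (sqrt b_lo) b_hi (G / b_lo) (\<bar>g (-1)\<bar> + \<bar>g 1\<bar>) G \<epsilon> N
      b u u' u'' g g' g''"
    using solution_shishkin_setting[OF assms(1-5,7-10)] by blast
  then interpret S: shishkin_setting "sqrt b_lo" b_hi "G / b_lo" "\<bar>g (-1)\<bar> + \<bar>g 1\<bar>" G \<epsilon> N
    b u u' u'' g g' g'' .
  show ?thesis using S.interpolation_net_INF_bounds[OF C] by simp
qed

theorem proposition4p3:
  fixes b f :: "real \<Rightarrow> real" and b_lo b_hi :: real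
  assumes "C2_on b {-1..1}" and "C2_on f {-1..1}"
    and "0 < b_lo" and "\<forall>x\<in>{-1..1}. b_lo \<le> b x \<and> b x \<le> b_hi"
  shows "\<exists>C c. C > 0 \<and> c > 0 \<and>
    (\<forall>N::nat. \<forall>\<epsilon>::real. \<forall>u. N \<ge> 2 \<longrightarrow> 0 < \<epsilon> \<longrightarrow> \<epsilon> \<le> 1 \<longrightarrow> is_solution \<epsilon> b f u \<longrightarrow>
       (INF \<Phi>\<in>NN 2 (nat \<lfloor>c * real N\<rfloor>) 1 1. ereal (energy_norm \<epsilon> b (\<lambda>x. u x - R \<Phi> x)))
          \<le> ereal (C * ln (real N) / real N) \<and>
       (INF \<Phi>\<in>NN 2 (nat \<lfloor>c * real N\<rfloor>) 1 1. ereal (L2_norm_I (\<lambda>x. u x - R \<Phi> x)))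
          \<le> ereal (C * (ln (real N) / real N)\<^sup>2))"
proof -
  have b_pos: "\<forall>x\<in>{-1..1}. 0 < b x" using assms(3,4) by fastforce
  define g where "g x = f x / b x" for x
  have g: "\<forall>x\<in>{-1..1}. b x * g x = f x" using b_pos by (force simp: g_def)
  have "C2_on g {-1..1}"
    unfolding g_def[abs_def] by (rule C2_on_divide[OF assms(2,1)]) (use b_pos in force)
  then obtain G g' g'' where g_cont: "continuous_on {-1..1} g" and "0 \<le> G"
    and g_deriv: "\<forall>x\<in>{-1<..<1}. (g has_real_derivative g' x) (at x) \<and>
      (g' has_real_derivative g'' x) (at x) \<and> \<bar>g'' x\<bar> \<le> G"
    using C2_on_Icc_bounded_second_deriv by blast
  interpret shishkin_constants "sqrt b_lo" b_hi "G / b_lo" "\<bar>g (-1)\<bar> + \<bar>g 1\<bar>" G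
    using assms(3,4) \<open>0 \<le> G\<close> by unfold_locales force+
  define C where "C = sqrt 2 * (1 + sqrt b_hi) * K + 1"
  have "0 < C" unfolding C_def using constants_nonneg nonneg(1) by (intro add_nonneg_pos) auto
  show ?thesis
    by (rule exI[of _ C], rule exI[of _ 3])
      (use \<open>0 < C\<close> solution_interpolation_bounds[OF assms(3,4) g g_cont g_deriv] in
        \<open>auto simp: C_def\<close>)
qed

end
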